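(* Let $q$ be a prime power, $N=q^2-1$, $\alpha\in\mathbb{F}_{q^2}$ with $\mathbb{F}_{q^2}=\mathbb{F}_q(\alpha)$, $g$ a primitive root of $\mathbb{F}_{q^2}$, and $M=\{\log_g(t-\alpha):t\in\mathbb{F}_q\}$ (so $0\notin M$ and $|M|=q$). Let $$\Phi=\frac{1}{\sqrt{q+1}}\mathcal{F}^{(N)}_{M\cup\{0\}}\in\mathbb{C}^{(q+1)\times(q^2-1)},$$ with columns $\Phi_0,\dots,\Phi_{N-1}$, and for $j=0,\dots,q-2$ let $T_j=\{j+k(q-1):0\le k\le q\}$. Then: (1) for each $0\le j\le q-2$, the $(q+1)\times(q+1)$ submatrix $\Phi_{T_j}$ (columns indexed by $T_j$) is unitary, i.e. its columns form an orthonormal basis of $\mathbb{C}^{q+1}$; (2) for $k_1\in T_{j_1}$, $k_2\in T_{j_2}$ with $j_1\neq j_2$, $$\frac{\sqrt q-1}{q+1}\le|\langle\Phi_{k_1},\Phi_{k_2}\rangle|\le\frac{\sqrt q+1}{q+1}.$$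
   Context: $\log_g u$ for $u\in\mathbb{F}_{q^2}^*$ is the unique integer $m$ with $0\le m<q^2-1$ and $g^m=u$. $\mathcal{F}^{(N)}$ is the $N\times N$ Fourier matrix with $(k,j)$ entry $e^{2\pi i kj/N}$, $0\le k,j\le N-1$; for $M'\subset\{0,\dots,N-1\}$, $\mathcal{F}^{(N)}_{M'}$ is the submatrix of rows with indices in $M'$. $\langle u,v\rangle=\sum_r u_r\overline{v_r}$. *)

theory Defs
  imports Complex_Main "HOL-Computational_Algebra.Primes"
begin

definition is_subfield :: "'a::field set \<Rightarrow> bool" where
  "is_subfield K \<longleftrightarrow> 0 \<in> K \<and> 1 \<in> K \<and> (\<forall>x\<in>K. \<forall>y\<in>K. x + y \<in> K \<and> x * y \<in> K)
     \<and> (\<forall>x\<in>K. - x \<in> K) \<and> (\<forall>x\<in>K. x \<noteq> 0 \<longrightarrow> inverse x \<in> K)"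

definition adjoin :: "'a::field set \<Rightarrow> 'a \<Rightarrow> 'a set" where
  "adjoin K a = \<Inter>{L. is_subfield L \<and> K \<subseteq> L \<and> a \<in> L}"

definition primitive_root :: "'a::{field,finite} \<Rightarrow> bool" where
  "primitive_root g \<longleftrightarrow> g \<noteq> 0 \<and> (\<forall>u. u \<noteq> 0 \<longrightarrow> (\<exists>m::nat. g ^ m = u))"

definition dlog :: "'a::{field,finite} \<Rightarrow> 'a \<Rightarrow> nat" where
  "dlog g u = (THE m. m < card (UNIV :: 'a set) - 1 \<and> g ^ m = u)"

definition fourier :: "nat \<Rightarrow> nat \<Rightarrow> nat \<Rightarrow> complex" where
  "fourier N k j = exp (2 * of_real pi * \<i> * of_nat (k * j) / of_nat N)"

definition cinner :: "nat set \<Rightarrow> (nat \<Rightarrow> complex) \<Rightarrow> (nat \<Rightarrow> complex) \<Rightarrow> complex" where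
  "cinner R u v = (\<Sum>r\<in>R. u r * cnj (v r))"

end

theory Submission
  imports Defs "HOL-Library.Real_Mod" "HOL-Library.Cardinality"
begin

(* For D = k1 - k2 let chi(u) = exp(2 pi i D log_g u / N) be the corresponding multiplicative
   character of F_{q^2}.  Then <Phi_k1, Phi_k2> = (1 + S) / (q + 1) with
   S = sum over t in F_q of chi(t - alpha).
   Columns from the same T_j have q - 1 dividing D, so chi is trivial on F_q^* (whose
   discrete logarithms are the multiples of q + 1) but, for k1 ~= k2, not on all of F_{q^2}^*.
   Every element outside F_q is uniquely c (t - alpha) with c in F_q^*, t in F_q, hence
   (q - 1) S equals the character sum over the complement of F_q, which is -(q - 1): so S = -1
   and the columns are orthonormal.
   Columns from different T_j give chi nontrivial on F_q^*.  Every element outside F_q is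
   uniquely (s - alpha) / (t - alpha) with s ~= t in F_q, so in |S|^2 the off-diagonal terms
   sum to the character sum over the complement of F_q, which now vanishes; the q diagonal
   terms give |S|^2 = q, and the bounds follow from the triangle inequality. *)

lemma bij_betw_mult_if_mult_closed:
  fixes u :: "'a::field"
  assumes "finite A" "u \<noteq> 0" "\<And>x. x \<in> A \<Longrightarrow> u * x \<in> A"
  shows "bij_betw ((*) u) A A"
proof -
  have inj: "inj_on ((*) u) A" using assms(2) by (auto simp: inj_on_def)
  then have "(*) u ` A = A" using assms by (intro card_subset_eq) (auto simp: card_image)
  with inj show ?thesis by (rule bij_betw_imageI)
qed

lemma power_card_eq_1_if_mult_closed:
  fixes u :: "'a::field"
  assumes "finite A" "0 \<notin> A" "u \<noteq> 0" "\<And>x. x \<in> A \<Longrightarrow> u * x \<in> A"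
  shows "u ^ card A = 1"
proof -
  have "prod id A = (\<Prod>x\<in>A. u * x)"
    using prod.reindex_bij_betw[OF bij_betw_mult_if_mult_closed[OF assms(1,3,4)], of id] by simp
  also have "\<dots> = u ^ card A * prod id A" by (simp add: prod.distrib)
  finally have "u ^ card A * prod id A = 1 * prod id A" by simp
  moreover have "prod id A \<noteq> 0" using assms(1,2) by (auto simp: prod_zero_iff)
  ultimately show ?thesis by simp
qed

lemma power_card_minus_1_eq_1:
  fixes u :: "'a::{field,finite}"
  assumes "u \<noteq> 0"
  shows "u ^ (CARD('a) - 1) = 1"
proof -
  have "u ^ card (UNIV - {0::'a}) = 1"
    by (rule power_card_eq_1_if_mult_closed) (use assms in auto)
  then show ?thesis by (simp add: card_Diff_singleton)
qed

lemma power_mod_eq_if_power_eq_1: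
  fixes u :: "'a::monoid_mult"
  assumes "u ^ n = 1"
  shows "u ^ (m mod n) = u ^ m"
proof -
  have "u ^ m = (u ^ n) ^ (m div n) * u ^ (m mod n)"
    by (metis div_mult_mod_eq power_add power_mult mult.commute)
  with assms show ?thesis by simp
qed

lemma two_le_card_field: "2 \<le> CARD('a::{field,finite})"
proof -
  have "card {0::'a, 1} \<le> CARD('a)" by (intro card_mono) auto
  then show ?thesis by simp
qed

lemma is_subfieldD:
  assumes "is_subfield K"
  shows "0 \<in> K" "1 \<in> K" "x \<in> K \<Longrightarrow> y \<in> K \<Longrightarrow> x + y \<in> K"
    "x \<in> K \<Longrightarrow> y \<in> K \<Longrightarrow> x * y \<in> K" "x \<in> K \<Longrightarrow> -x \<in> K"
    "x \<in> K \<Longrightarrow> y \<in> K \<Longrightarrow> x - y \<in> K"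
    "x \<in> K \<Longrightarrow> y \<in> K \<Longrightarrow> x / y \<in> K"
  using assms unfolding is_subfield_def
  by (metis, metis, metis, metis, metis, metis diff_conv_add_uminus,
      metis divide_inverse inverse_zero)

lemma two_le_card_subfield:
  fixes K :: "'a::{field,finite} set"
  assumes "is_subfield K"
  shows "2 \<le> card K"
proof -
  have "card {0::'a, 1} \<le> card K" using is_subfieldD(1,2)[OF assms] by (intro card_mono) auto
  then show ?thesis by simp
qed

lemma subfield_power_card_minus_1_eq_1:
  fixes u :: "'a::{field,finite}"
  assumes "is_subfield K" "u \<in> K" "u \<noteq> 0"
  shows "u ^ (card K - 1) = 1"
proof -
  have "u ^ card (K - {0}) = 1"
    by (rule power_card_eq_1_if_mult_closed) (use assms is_subfieldD[OF assms(1)] in auto)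
  then show ?thesis using is_subfieldD(1)[OF assms(1)] by (simp add: card_Diff_singleton)
qed

lemma notin_subfield_if_adjoin_eq_UNIV:
  assumes "is_subfield K" "adjoin K \<alpha> = UNIV" "K \<noteq> UNIV"
  shows "\<alpha> \<notin> K"
  using assms unfolding adjoin_def by blast

subsection \<open>Primitive roots and discrete logarithms\<close>

context
  fixes g :: "'a::{field,finite}"
  assumes g: "primitive_root g"
begin

lemma primitive_root_nonzero: "g \<noteq> 0"
  using g by (simp add: primitive_root_def)

lemma primitive_root_powers: "(\<lambda>m. g ^ m) ` {..<CARD('a) - 1} = UNIV - {0}"
proof
  show "(\<lambda>m. g ^ m) ` {..<CARD('a) - 1} \<subseteq> UNIV - {0}"
    using primitive_root_nonzero by auto
  show "UNIV - {0} \<subseteq> (\<lambda>m. g ^ m) ` {..<CARD('a) - 1}"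
  proof
    fix u :: 'a assume "u \<in> UNIV - {0}"
    then obtain m where "g ^ m = u" using g by (auto simp: primitive_root_def)
    then have "u = g ^ (m mod (CARD('a) - 1))"
      using power_mod_eq_if_power_eq_1[OF power_card_minus_1_eq_1[OF primitive_root_nonzero]]
      by simp
    moreover have "m mod (CARD('a) - 1) < CARD('a) - 1"
      using two_le_card_field[where 'a='a] by simp
    ultimately show "u \<in> (\<lambda>m. g ^ m) ` {..<CARD('a) - 1}" by blast
  qed
qed

lemma inj_on_primitive_root_power: "inj_on (\<lambda>m. g ^ m) {..<CARD('a) - 1}"
proof (rule eq_card_imp_inj_on)
  show "card ((\<lambda>m. g ^ m) ` {..<CARD('a) - 1}) = card {..<CARD('a) - 1}"
    unfolding primitive_root_powers by (simp add: card_Diff_singleton)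
qed simp

lemma primitive_root_power_eq_iff:
  "g ^ a = g ^ b \<longleftrightarrow> a mod (CARD('a) - 1) = b mod (CARD('a) - 1)"
proof -
  have N: "0 < CARD('a) - 1" using two_le_card_field[where 'a='a] by simp
  have "g ^ a = g ^ b \<longleftrightarrow> g ^ (a mod (CARD('a) - 1)) = g ^ (b mod (CARD('a) - 1))"
    using power_mod_eq_if_power_eq_1[OF power_card_minus_1_eq_1[OF primitive_root_nonzero]]
    by simp
  also have "\<dots> \<longleftrightarrow> a mod (CARD('a) - 1) = b mod (CARD('a) - 1)"
    using inj_on_primitive_root_power N by (auto dest: inj_onD)
  finally show ?thesis .
qed

lemma dlog_lt_and_power_dlog:
  assumes "u \<noteq> 0"
  shows "dlog g u < CARD('a) - 1 \<and> g ^ dlog g u = u"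
proof -
  have "u \<in> (\<lambda>m. g ^ m) ` {..<CARD('a) - 1}"
    using assms unfolding primitive_root_powers by simp
  then obtain m where m: "m < CARD('a) - 1" "g ^ m = u" by auto
  with inj_on_primitive_root_power have "\<exists>!m. m < CARD('a) - 1 \<and> g ^ m = u"
    by (auto dest: inj_onD)
  then show ?thesis unfolding dlog_def by (rule theI')
qed

lemma power_dlog: "u \<noteq> 0 \<Longrightarrow> g ^ dlog g u = u"
  using dlog_lt_and_power_dlog by blast

lemma dlog_lt: "u \<noteq> 0 \<Longrightarrow> dlog g u < CARD('a) - 1"
  using dlog_lt_and_power_dlog by blast

lemma dlog_power: "dlog g (g ^ m) = m mod (CARD('a) - 1)"
proof -
  have "g ^ m \<noteq> 0" using primitive_root_nonzero by simp
  from dlog_lt_and_power_dlog[OF this] show ?thesis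
    using primitive_root_power_eq_iff[of "dlog g (g ^ m)" m] by (metis mod_less)
qed

end

subsection \<open>Multiplicative characters\<close>

definition mult_char :: "'a::{field,finite} \<Rightarrow> int \<Rightarrow> 'a \<Rightarrow> complex" where
  "mult_char g D u = cis (2 * pi * of_int (int (dlog g u) * D) / real (CARD('a) - 1))"

lemma mult_char_0 [simp]: "mult_char g 0 u = 1"
  by (simp add: mult_char_def)

lemma cis_2pi_ratio_eq_1_iff:
  assumes "b \<noteq> 0"
  shows "cis (2 * pi * of_int a / of_int b) = 1 \<longleftrightarrow> b dvd a"
proof
  assume "cis (2 * pi * of_int a / of_int b) = 1"
  then obtain n where "2 * pi * of_int a / of_int b = of_int n * (2 * pi)"
    using cis_eq_1_iff by blast
  then have "real_of_int a = real_of_int (n * b)" using assms by (simp add: field_simps)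
  then show "b dvd a" by (simp only: of_int_eq_iff) simp
next
  assume "b dvd a"
  then obtain n where "a = b * n" by blast
  then have "2 * pi * of_int a / of_int b = 2 * pi * of_int n" using assms by simp
  then show "cis (2 * pi * of_int a / of_int b) = 1" by (metis Ints_of_int cis_multiple_2pi)
qed

lemma fourier_eq_cis: "fourier N r k = cis (2 * pi * real (r * k) / real N)"
  unfolding fourier_def cis_conv_exp by (simp add: field_simps)

context
  fixes g :: "'a::{field,finite}"
  assumes g: "primitive_root g"
begin

lemma mult_char_power:
  "mult_char g D (g ^ m) = cis (2 * pi * of_int (int m * D) / real (CARD('a) - 1))"
proof -
  let ?N = "CARD('a) - 1"
  have N: "real ?N \<noteq> 0" using two_le_card_field[where 'a='a] by simp
  have m: "real m = real (m mod ?N) + real ?N * real (m div ?N)"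
    by (metis mod_mult_div_eq of_nat_add of_nat_mult)
  have "mult_char g D (g ^ m) = cis (2 * pi * of_int (int (m mod ?N) * D) / real ?N)"
    by (simp add: mult_char_def dlog_power[OF g])
  also have "\<dots> = cis (2 * pi * of_int (int (m mod ?N) * D) / real ?N)
                   * cis (2 * pi * of_int (int (m div ?N) * D))"
    by (metis Ints_of_int cis_multiple_2pi mult_1_right)
  also have "\<dots> = cis (2 * pi * of_int (int m * D) / real ?N)"
    unfolding cis_mult using N by (simp add: m field_simps)
  finally show ?thesis .
qed

lemma mult_char_power_eq_1_iff:
  "mult_char g D (g ^ m) = 1 \<longleftrightarrow> int (CARD('a) - 1) dvd int m * D"
  using cis_2pi_ratio_eq_1_iff[of "int (CARD('a) - 1)" "int m * D"] two_le_card_field[where 'a='a]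
  by (simp add: mult_char_power)

lemma mult_char_mult:
  assumes "u \<noteq> 0" "v \<noteq> 0"
  shows "mult_char g D (u * v) = mult_char g D u * mult_char g D v"
proof -
  obtain a b where ab: "u = g ^ a" "v = g ^ b" using power_dlog[OF g] assms by metis
  then have "u * v = g ^ (a + b)" by (simp add: power_add)
  then show ?thesis
    unfolding ab by (simp add: mult_char_power cis_mult distrib_left distrib_right add_divide_distrib)
qed

lemma mult_char_1 [simp]: "mult_char g D 1 = 1"
  using mult_char_power[of D 0] by simp

lemma cnj_mult_char:
  assumes "u \<noteq> 0"
  shows "cnj (mult_char g D u) = mult_char g D (inverse u)"
proof -
  have "mult_char g D u * mult_char g D (inverse u) = 1"
    using mult_char_mult[of u "inverse u"] assms by simp
  moreover have "cnj (mult_char g D u) * mult_char g D u = 1"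
    unfolding mult_char_def cis_cnj cis_mult by simp
  ultimately show ?thesis by (metis mult.commute mult.left_neutral mult.assoc)
qed

lemma sum_mult_char_eq_0:
  assumes "finite A" "0 \<notin> A" "v \<noteq> 0" "\<And>x. x \<in> A \<Longrightarrow> v * x \<in> A"
    and "mult_char g D v \<noteq> 1"
  shows "(\<Sum>x\<in>A. mult_char g D x) = 0"
proof -
  have "(\<Sum>x\<in>A. mult_char g D x) = (\<Sum>x\<in>A. mult_char g D (v * x))"
    using sum.reindex_bij_betw[OF bij_betw_mult_if_mult_closed[OF assms(1,3,4)], of "mult_char g D"]
    by simp
  also have "\<dots> = mult_char g D v * (\<Sum>x\<in>A. mult_char g D x)"
    unfolding sum_distrib_left using assms(2,3) by (intro sum.cong refl mult_char_mult) auto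
  finally have "(mult_char g D v - 1) * (\<Sum>x\<in>A. mult_char g D x) = 0"
    by (simp add: algebra_simps)
  with assms(5) show ?thesis by simp
qed

end

subsection \<open>Quadratic extensions\<close>

lemma bij_betw_if_inj_on_card_eq:
  assumes "inj_on h A" "h ` A \<subseteq> B" "finite B" "card A = card B"
  shows "bij_betw h A B"
  by (metis assms bij_betw_imageI card_image card_subset_eq)

locale quadratic_extension =
  fixes K :: "'a::{field,finite} set" and \<alpha> :: 'a
  assumes subfield: "is_subfield K"
    and generator_notin_subfield: "\<alpha> \<notin> K"
    and card_UNIV_eq: "CARD('a) = card K ^ 2"
begin

lemmas subfield_closed = is_subfieldD[OF subfield]

lemma linear_in_subfield_iff:
  assumes "a \<in> K" "b \<in> K"
  shows "a * \<alpha> + b \<in> K \<longleftrightarrow> a = 0"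
proof
  assume "a * \<alpha> + b \<in> K"
  then have "a * \<alpha> \<in> K" using subfield_closed(6)[of _ b] assms(2) by force
  show "a = 0"
  proof (rule ccontr)
    assume "a \<noteq> 0"
    then have "\<alpha> = (a * \<alpha>) / a" by simp
    then have "\<alpha> \<in> K" using \<open>a * \<alpha> \<in> K\<close> assms(1) subfield_closed(7) by metis
    with generator_notin_subfield show False ..
  qed
qed (use assms in simp)

lemma translate_nonzero: "t \<in> K \<Longrightarrow> t - \<alpha> \<noteq> 0"
  using generator_notin_subfield by auto

lemma card_compl_subfield: "card (UNIV - K) = card K * card K - card K"
  using card_UNIV_eq by (simp add: card_Diff_subset power2_eq_square)

lemma bij_betw_scaled_translates:
  "bij_betw (\<lambda>(c, t). c * (t - \<alpha>)) ((K - {0}) \<times> K) (UNIV - K)"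
proof (rule bij_betw_if_inj_on_card_eq)
  show "inj_on (\<lambda>(c, t). c * (t - \<alpha>)) ((K - {0}) \<times> K)"
  proof (rule inj_onI)
    fix x y
    assume "x \<in> (K - {0}) \<times> K" "y \<in> (K - {0}) \<times> K"
      and "(\<lambda>(c, t). c * (t - \<alpha>)) x = (\<lambda>(c, t). c * (t - \<alpha>)) y"
    then obtain c t c' t' where xy: "x = (c, t)" "y = (c', t')"
      and K: "c \<in> K" "c \<noteq> 0" "t \<in> K" "c' \<in> K" "t' \<in> K"
      and eq: "c * (t - \<alpha>) = c' * (t' - \<alpha>)"
      by auto
    then have "(c' - c) * \<alpha> + (c * t - c' * t') = 0" by (simp add: algebra_simps)
    then have "c' = c"
      using linear_in_subfield_iff[of "c' - c" "c * t - c' * t'"] K subfield_closed by auto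
    with eq K xy show "x = y" by simp
  qed
  show "(\<lambda>(c, t). c * (t - \<alpha>)) ` ((K - {0}) \<times> K) \<subseteq> UNIV - K"
  proof
    fix u assume "u \<in> (\<lambda>(c, t). c * (t - \<alpha>)) ` ((K - {0}) \<times> K)"
    then obtain c t where K: "c \<in> K" "c \<noteq> 0" "t \<in> K" and u: "u = (- c) * \<alpha> + c * t"
      by (force simp: algebra_simps)
    have "u \<notin> K" using linear_in_subfield_iff[of "- c" "c * t"] K subfield_closed by (simp add: u)
    then show "u \<in> UNIV - K" by simp
  qed
  show "card ((K - {0}) \<times> K) = card (UNIV - K)"
    using subfield_closed(1)
    by (simp add: card_cartesian_product card_Diff_singleton card_compl_subfield diff_mult_distrib)
qed simp

lemma bij_betw_translate_ratios:
  "bij_betw (\<lambda>(s, t). (s - \<alpha>) / (t - \<alpha>)) {(s, t) \<in> K \<times> K. s \<noteq> t} (UNIV - K)"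
proof (rule bij_betw_if_inj_on_card_eq)
  show "inj_on (\<lambda>(s, t). (s - \<alpha>) / (t - \<alpha>)) {(s, t) \<in> K \<times> K. s \<noteq> t}"
  proof (rule inj_onI)
    fix x y
    assume "x \<in> {(s, t) \<in> K \<times> K. s \<noteq> t}" "y \<in> {(s, t) \<in> K \<times> K. s \<noteq> t}"
      and "(\<lambda>(s, t). (s - \<alpha>) / (t - \<alpha>)) x = (\<lambda>(s, t). (s - \<alpha>) / (t - \<alpha>)) y"
    then obtain s t s' t' where xy: "x = (s, t)" "y = (s', t')"
      and K: "s \<in> K" "t \<in> K" "s \<noteq> t" "s' \<in> K" "t' \<in> K" "s' \<noteq> t'"
      and "(s - \<alpha>) / (t - \<alpha>) = (s' - \<alpha>) / (t' - \<alpha>)"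
      by auto
    then have eq: "(s - \<alpha>) * (t' - \<alpha>) = (s' - \<alpha>) * (t - \<alpha>)"
      using translate_nonzero by (simp add: field_simps)
    then have "(s' + t - s - t') * \<alpha> + (s * t' - s' * t) = 0" by (simp add: algebra_simps)
    then have s: "s = s' + t - t'"
      using linear_in_subfield_iff[of "s' + t - s - t'" "s * t' - s' * t"] K subfield_closed
      by (auto simp: algebra_simps)
    have "(s - \<alpha>) * (t' - \<alpha>) - (s' - \<alpha>) * (t - \<alpha>) = (t - t') * (t' - s')"
      unfolding s by (simp add: algebra_simps)
    with eq K(6) have "t = t'" by simp
    with s xy show "x = y" by simp
  qed
  show "(\<lambda>(s, t). (s - \<alpha>) / (t - \<alpha>)) ` {(s, t) \<in> K \<times> K. s \<noteq> t} \<subseteq> UNIV - K"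
  proof
    fix r assume "r \<in> (\<lambda>(s, t). (s - \<alpha>) / (t - \<alpha>)) ` {(s, t) \<in> K \<times> K. s \<noteq> t}"
    then obtain s t where K: "s \<in> K" "t \<in> K" "s \<noteq> t" and r: "r = (s - \<alpha>) / (t - \<alpha>)"
      by auto
    have lin: "(r - 1) * \<alpha> + (s - r * t) = 0"
      using translate_nonzero[OF K(2)] by (simp add: r field_simps)
    have "r \<notin> K"
    proof
      assume "r \<in> K"
      then have "r - 1 \<in> K" "s - r * t \<in> K" using K subfield_closed by simp_all
      with lin have "r = 1" using linear_in_subfield_iff subfield_closed(1) by fastforce
      with K(3) translate_nonzero[OF K(2)] show False by (simp add: r)
    qed
    then show "r \<in> UNIV - K" by simp
  qed
  have "{(s, t) \<in> K \<times> K. s \<noteq> t} = K \<times> K - (\<lambda>t. (t, t)) ` K" by auto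
  then show "card {(s, t) \<in> K \<times> K. s \<noteq> t} = card (UNIV - K)"
    by (simp add: card_Diff_subset card_image inj_on_def card_cartesian_product subset_eq
        card_compl_subfield)
qed simp

end

locale quadratic_extension_primitive_root = quadratic_extension K \<alpha>
  for K :: "'a::{field,finite} set" and \<alpha> :: 'a +
  fixes g :: 'a
  assumes primitive_root: "primitive_root g"
begin

lemma card_UNIV_minus_1: "CARD('a) - 1 = (card K + 1) * (card K - 1)"
  using card_UNIV_eq by (cases "card K") (simp_all add: power2_eq_square)

lemma card_Suc_dvd_dlog_subfield:
  assumes "c \<in> K" "c \<noteq> 0"
  shows "card K + 1 dvd dlog g c"
proof -
  have "g ^ (dlog g c * (card K - 1)) = g ^ 0"
    using subfield_power_card_minus_1_eq_1[OF subfield assms]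
    by (simp add: power_mult power_dlog[OF primitive_root assms(2)])
  then have "(card K - 1) * (card K + 1) dvd (card K - 1) * dlog g c"
    unfolding primitive_root_power_eq_iff[OF primitive_root] card_UNIV_minus_1
    by (simp add: mod_eq_0_iff_dvd mult.commute)
  moreover have "0 < card K - 1" using two_le_card_subfield[OF subfield] by simp
  ultimately show ?thesis by (simp only: nat_mult_dvd_cancel1)
qed

lemma primitive_root_power_card_Suc_in_subfield: "g ^ (card K + 1) \<in> K"
proof -
  let ?x = "g ^ (card K + 1)"
  have "K - {0} \<subseteq> (\<lambda>i. ?x ^ i) ` {..<card K - 1}"
  proof
    fix c assume c: "c \<in> K - {0}"
    then obtain m where m: "dlog g c = (card K + 1) * m"
      using card_Suc_dvd_dlog_subfield by blast
    have "dlog g c < CARD('a) - 1" using dlog_lt[OF primitive_root] c by simp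
    then have "(card K + 1) * m < (card K + 1) * (card K - 1)"
      by (simp only: m card_UNIV_minus_1)
    then have "m < card K - 1" using mult_less_cancel1 by blast
    moreover have "c = ?x ^ m"
      using power_dlog[OF primitive_root, of c] c by (simp only: m power_mult) simp
    ultimately show "c \<in> (\<lambda>i. ?x ^ i) ` {..<card K - 1}" by blast
  qed
  \<comment> \<open>the \<open>q - 1\<close> elements of \<open>K - {0}\<close> exhaust the at most \<open>q - 1\<close> powers of \<open>g ^ (q + 1)\<close>\<close>
  moreover have "card ((\<lambda>i. ?x ^ i) ` {..<card K - 1}) \<le> card (K - {0})"
    using card_image_le[of "{..<card K - 1}" "\<lambda>i. ?x ^ i"] subfield_closed(1)
    by (simp add: card_Diff_singleton)
  ultimately have powers: "K - {0} = (\<lambda>i. ?x ^ i) ` {..<card K - 1}"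
    by (intro card_seteq) auto
  have "?x ^ (card K - 1) = 1"
    using power_card_minus_1_eq_1[OF primitive_root_nonzero[OF primitive_root]]
    by (simp only: power_mult[symmetric] card_UNIV_minus_1)
  then have "?x = ?x ^ (1 mod (card K - 1))" by (metis power_mod_eq_if_power_eq_1 power_one_right)
  moreover have "1 mod (card K - 1) < card K - 1"
    using two_le_card_subfield[OF subfield] by (intro mod_less_divisor) simp
  ultimately show ?thesis using powers by (metis Diff_iff image_eqI lessThan_iff)
qed

lemma mult_char_subfield_eq_1:
  assumes "int (card K - 1) dvd D" "c \<in> K" "c \<noteq> 0"
  shows "mult_char g D c = 1"
proof -
  obtain m where m: "dlog g c = (card K + 1) * m"
    using card_Suc_dvd_dlog_subfield[OF assms(2,3)] by blast
  have "int (card K + 1) * int (card K - 1) dvd int (card K + 1) * (int m * D)"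
    using assms(1) by (intro mult_dvd_mono dvd_mult) simp_all
  then have "int (CARD('a) - 1) dvd int (dlog g c) * D"
    by (simp only: m card_UNIV_minus_1 of_nat_mult mult.assoc)
  then show ?thesis
    using mult_char_power_eq_1_iff[OF primitive_root] power_dlog[OF primitive_root assms(3)] by metis
qed

lemma mult_char_power_card_Suc_eq_1_iff:
  "mult_char g D (g ^ (card K + 1)) = 1 \<longleftrightarrow> int (card K - 1) dvd D"
  unfolding mult_char_power_eq_1_iff[OF primitive_root] card_UNIV_minus_1 of_nat_mult
  by (subst dvd_mult_cancel_left) simp_all

lemma mult_char_generator_eq_1_iff: "mult_char g D g = 1 \<longleftrightarrow> int (CARD('a) - 1) dvd D"
  using mult_char_power_eq_1_iff[OF primitive_root, of D 1] by simp

lemma sum_mult_char_compl_subfield: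
  assumes "v \<noteq> 0" "mult_char g D v \<noteq> 1"
  shows "(\<Sum>u\<in>UNIV - K. mult_char g D u) = - (\<Sum>u\<in>K - {0}. mult_char g D u)"
proof -
  have "UNIV - {0} = (UNIV - K) \<union> (K - {0})" using subfield_closed(1) by auto
  then have "(\<Sum>u\<in>UNIV - {0}. mult_char g D u)
             = (\<Sum>u\<in>UNIV - K. mult_char g D u) + (\<Sum>u\<in>K - {0}. mult_char g D u)"
    by (simp add: sum.union_disjoint Diff_Int_distrib2)
  moreover have "(\<Sum>u\<in>UNIV - {0}. mult_char g D u) = 0"
    by (rule sum_mult_char_eq_0[OF primitive_root _ _ assms(1) _ assms(2)]) (use assms(1) in auto)
  ultimately show ?thesis by (simp add: eq_neg_iff_add_eq_0)
qed

lemma sum_translates_eq_minus_1: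
  assumes trivial: "\<And>c. c \<in> K \<Longrightarrow> c \<noteq> 0 \<Longrightarrow> mult_char g D c = 1"
    and nontrivial: "mult_char g D g \<noteq> 1"
  shows "(\<Sum>t\<in>K. mult_char g D (t - \<alpha>)) = -1"
proof -
  let ?S = "\<Sum>t\<in>K. mult_char g D (t - \<alpha>)"
  have "- of_nat (card K - 1) = - (\<Sum>u\<in>K - {0}. mult_char g D u)"
    using trivial subfield_closed(1) by (simp add: card_Diff_singleton)
  also have "\<dots> = (\<Sum>u\<in>UNIV - K. mult_char g D u)"
    using sum_mult_char_compl_subfield[OF primitive_root_nonzero[OF primitive_root] nontrivial] ..
  also have "\<dots> = (\<Sum>c\<in>K - {0}. \<Sum>t\<in>K. mult_char g D (c * (t - \<alpha>)))"
    using sum.reindex_bij_betw[OF bij_betw_scaled_translates, of "mult_char g D"]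
    by (simp add: sum.cartesian_product split_def)
  also have "\<dots> = (\<Sum>c\<in>K - {0}. ?S)"
    using translate_nonzero
    by (intro sum.cong refl) (simp add: mult_char_mult[OF primitive_root] trivial)
  also have "\<dots> = of_nat (card K - 1) * ?S"
    using subfield_closed(1) by (simp add: card_Diff_singleton)
  finally have "of_nat (card K - 1) * ?S = of_nat (card K - 1) * (- 1)" by simp
  moreover have "of_nat (card K - 1) \<noteq> (0 :: complex)"
    using two_le_card_subfield[OF subfield] by simp
  ultimately show ?thesis by (metis mult_cancel_left)
qed

lemma norm_sum_translates:
  assumes nontrivial: "v \<in> K" "v \<noteq> 0" "mult_char g D v \<noteq> 1"
  shows "norm (\<Sum>t\<in>K. mult_char g D (t - \<alpha>)) = sqrt (card K)"
proof -
  let ?S = "\<Sum>t\<in>K. mult_char g D (t - \<alpha>)"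
  let ?f = "\<lambda>(s, t). mult_char g D ((s - \<alpha>) / (t - \<alpha>))"
  have "(\<Sum>u\<in>K - {0}. mult_char g D u) = 0"
    by (rule sum_mult_char_eq_0[OF primitive_root _ _ nontrivial(2) _ nontrivial(3)])
      (use nontrivial(1,2) subfield_closed in auto)
  then have off_diagonal: "(\<Sum>p\<in>{(s, t) \<in> K \<times> K. s \<noteq> t}. ?f p) = 0"
    using sum_mult_char_compl_subfield[OF nontrivial(2,3)]
      sum.reindex_bij_betw[OF bij_betw_translate_ratios, of "mult_char g D"]
    by (simp add: split_def)
  have diagonal: "(\<Sum>p\<in>(\<lambda>t. (t, t)) ` K. ?f p) = of_nat (card K)"
    using translate_nonzero by (simp add: sum.reindex inj_on_def mult_char_1[OF primitive_root])
  have "?S * cnj ?S = (\<Sum>p\<in>K \<times> K. ?f p)"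
    unfolding cnj_sum sum_product sum.cartesian_product using translate_nonzero
    by (intro sum.cong refl)
      (auto simp: cnj_mult_char[OF primitive_root] mult_char_mult[OF primitive_root] divide_inverse)
  also have "K \<times> K = {(s, t) \<in> K \<times> K. s \<noteq> t} \<union> (\<lambda>t. (t, t)) ` K" by auto
  also have "(\<Sum>p\<in>\<dots>. ?f p)
             = (\<Sum>p\<in>{(s, t) \<in> K \<times> K. s \<noteq> t}. ?f p) + (\<Sum>p\<in>(\<lambda>t. (t, t)) ` K. ?f p)"
    by (rule sum.union_disjoint) auto
  finally have "?S * cnj ?S = of_nat (card K)" using off_diagonal diagonal by simp
  then have "complex_of_real ((norm ?S)\<^sup>2) = complex_of_real (card K)"
    by (simp only: complex_norm_square of_real_of_nat_eq)
  then have "(norm ?S)\<^sup>2 = card K" using of_real_eq_iff by blast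
  then show ?thesis by (metis norm_ge_zero real_sqrt_unique)
qed

definition frame_gram :: "nat \<Rightarrow> nat \<Rightarrow> complex" where
  "frame_gram k1 k2 = cinner ((\<lambda>t. dlog g (t - \<alpha>)) ` K \<union> {0})
     (\<lambda>r. fourier (card K ^ 2 - 1) r k1 / complex_of_real (sqrt (real (card K) + 1)))
     (\<lambda>r. fourier (card K ^ 2 - 1) r k2 / complex_of_real (sqrt (real (card K) + 1)))"

lemma frame_gram_eq:
  "frame_gram k1 k2 = ((\<Sum>t\<in>K. mult_char g (int k1 - int k2) (t - \<alpha>)) + 1) / of_nat (card K + 1)"
proof -
  let ?N = "card K ^ 2 - 1"
  let ?E = "\<lambda>r. cis (2 * pi * of_int (int r * (int k1 - int k2)) / real ?N)"
  have entry: "fourier ?N r k1 / complex_of_real (sqrt (real (card K) + 1))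
      * cnj (fourier ?N r k2 / complex_of_real (sqrt (real (card K) + 1))) = ?E r / of_nat (card K + 1)"
    for r
  proof -
    have "complex_of_real (sqrt (real (card K) + 1)) * complex_of_real (sqrt (real (card K) + 1))
          = of_nat (card K + 1)"
      by (simp flip: of_real_mult)
    moreover have "fourier ?N r k1 * cnj (fourier ?N r k2) = ?E r"
      unfolding fourier_eq_cis cis_cnj cis_mult
      by (intro arg_cong[where f = cis]) (simp add: diff_divide_distrib algebra_simps)
    ultimately show ?thesis by simp
  qed
  have zero_notin: "0 \<notin> (\<lambda>t. dlog g (t - \<alpha>)) ` K"
  proof
    assume "0 \<in> (\<lambda>t. dlog g (t - \<alpha>)) ` K"
    then obtain t where t: "t \<in> K" "dlog g (t - \<alpha>) = 0" by auto
    then have "t - \<alpha> = 1" using power_dlog[OF primitive_root translate_nonzero[OF t(1)]] by simp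
    then have "\<alpha> = t - 1" by (simp add: algebra_simps)
    with t(1) subfield_closed generator_notin_subfield show False by metis
  qed
  have inj: "inj_on (\<lambda>t. dlog g (t - \<alpha>)) K"
    by (rule inj_on_inverseI[where g = "\<lambda>m. g ^ m + \<alpha>"])
      (metis power_dlog[OF primitive_root] translate_nonzero diff_add_cancel)
  have "frame_gram k1 k2 = (\<Sum>r\<in>(\<lambda>t. dlog g (t - \<alpha>)) ` K \<union> {0}. ?E r) / of_nat (card K + 1)"
    unfolding frame_gram_def cinner_def entry by (simp add: sum_divide_distrib)
  also have "(\<Sum>r\<in>(\<lambda>t. dlog g (t - \<alpha>)) ` K \<union> {0}. ?E r) = (\<Sum>t\<in>K. ?E (dlog g (t - \<alpha>))) + 1"
    using zero_notin inj by (simp add: sum.reindex)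
  also have "(\<Sum>t\<in>K. ?E (dlog g (t - \<alpha>))) = (\<Sum>t\<in>K. mult_char g (int k1 - int k2) (t - \<alpha>))"
    by (simp add: mult_char_def card_UNIV_eq)
  finally show ?thesis .
qed

lemma frame_gram_same_class:
  assumes "int k1 - int k2 = d * int (card K - 1)" "\<bar>d\<bar> \<le> int (card K)"
  shows "frame_gram k1 k2 = (if k1 = k2 then 1 else 0)"
proof (cases "k1 = k2")
  case True
  have nz: "(of_nat (card K + 1) :: complex) \<noteq> 0" by (simp only: of_nat_eq_0_iff)
  have "(\<Sum>t\<in>K. mult_char g (int k1 - int k2) (t - \<alpha>)) + 1 = of_nat (card K + 1)"
    using True by simp
  then have "frame_gram k1 k2 = 1" by (simp only: frame_gram_eq divide_self[OF nz])
  with True show ?thesis by simp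
next
  case False
  with assms(1) have "d \<noteq> 0" by auto
  have "\<not> int (CARD('a) - 1) dvd int k1 - int k2"
  proof
    assume "int (CARD('a) - 1) dvd int k1 - int k2"
    then have "int (card K + 1) * int (card K - 1) dvd d * int (card K - 1)"
      by (simp only: assms(1) card_UNIV_minus_1 of_nat_mult)
    then have "int (card K + 1) dvd d" using two_le_card_subfield[OF subfield] by simp
    from dvd_imp_le_int[OF \<open>d \<noteq> 0\<close> this] assms(2) show False by simp
  qed
  then have nontrivial: "mult_char g (int k1 - int k2) g \<noteq> 1"
    unfolding mult_char_generator_eq_1_iff .
  have "int (card K - 1) dvd int k1 - int k2" unfolding assms(1) by simp
  then have "(\<Sum>t\<in>K. mult_char g (int k1 - int k2) (t - \<alpha>)) = -1"
    using sum_translates_eq_minus_1[OF mult_char_subfield_eq_1 nontrivial] by blast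
  with False show ?thesis by (simp add: frame_gram_eq)
qed

lemma norm_frame_gram_bounds:
  assumes "\<not> int (card K - 1) dvd int k1 - int k2"
  shows "(sqrt (card K) - 1) / (card K + 1) \<le> norm (frame_gram k1 k2)
    \<and> norm (frame_gram k1 k2) \<le> (sqrt (card K) + 1) / (card K + 1)"
proof -
  define S where "S = (\<Sum>t\<in>K. mult_char g (int k1 - int k2) (t - \<alpha>))"
  have nontrivial: "mult_char g (int k1 - int k2) (g ^ (card K + 1)) \<noteq> 1"
    using assms unfolding mult_char_power_card_Suc_eq_1_iff .
  have "norm S = sqrt (card K)"
    unfolding S_def
    by (rule norm_sum_translates[OF primitive_root_power_card_Suc_in_subfield _ nontrivial])
      (simp add: primitive_root_nonzero[OF primitive_root])
  moreover have "norm (frame_gram k1 k2) = norm (S + 1) / (card K + 1)"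
    unfolding frame_gram_eq S_def norm_divide by (simp only: norm_of_nat)
  moreover have "norm S - 1 \<le> norm (S + 1)" "norm (S + 1) \<le> norm S + 1"
    using norm_triangle_ineq[of "S + 1" "- 1"] norm_triangle_ineq[of S 1] by simp_all
  ultimately show ?thesis by (auto simp: divide_right_mono)
qed

end

lemma int_diff_of_same_class:
  assumes "k1 \<in> {j + i * n | i. i \<le> m}" "k2 \<in> {j + i * n | i. i \<le> m}"
  obtains d :: int where "int k1 - int k2 = d * int n" "\<bar>d\<bar> \<le> int m"
proof -
  obtain i1 i2 where "k1 = j + i1 * n" "k2 = j + i2 * n" "i1 \<le> m" "i2 \<le> m"
    using assms by blast
  then have "int k1 - int k2 = (int i1 - int i2) * int n" "\<bar>int i1 - int i2\<bar> \<le> int m"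
    by (auto simp: algebra_simps)
  then show ?thesis by (rule that)
qed

lemma not_dvd_int_diff_of_distinct_classes:
  assumes "k1 \<in> {j1 + i * n | i. i \<le> m}" "k2 \<in> {j2 + i * n | i. i \<le> m}"
    and "j1 < n" "j2 < n" "j1 \<noteq> j2"
  shows "\<not> int n dvd int k1 - int k2"
proof
  assume dvd: "int n dvd int k1 - int k2"
  obtain i1 i2 where "k1 = j1 + i1 * n" "k2 = j2 + i2 * n" using assms(1,2) by blast
  then have "int k1 - int k2 = (int j1 - int j2) + (int i1 - int i2) * int n"
    by (simp add: algebra_simps)
  with dvd have "int n dvd int j1 - int j2" by (simp add: dvd_add_left_iff)
  moreover have "int j1 - int j2 \<noteq> 0" "\<bar>int j1 - int j2\<bar> < int n" using assms(3-5) by auto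
  ultimately show False using dvd_imp_le_int[of "int j1 - int j2" "int n"] by simp
qed

theorem theorem3p3:
  fixes q :: nat and K :: "'a::{field,finite} set" and \<alpha> g :: 'a
    and N :: nat and M :: "nat set" and Phi :: "nat \<Rightarrow> nat \<Rightarrow> complex" and T :: "nat \<Rightarrow> nat set"
  assumes "\<exists>p k. prime p \<and> k > 0 \<and> q = p ^ k"
    and "card (UNIV :: 'a set) = q ^ 2"
    and "is_subfield K" and "card K = q"
    and "adjoin K \<alpha> = UNIV"
    and "primitive_root g"
  defines "N \<equiv> q ^ 2 - 1"
    and "M \<equiv> (\<lambda>t. dlog g (t - \<alpha>)) ` K"
    and "Phi \<equiv> (\<lambda>k r. fourier N r k / complex_of_real (sqrt (real q + 1)))"
    and "T \<equiv> (\<lambda>j. {j + i * (q - 1) | i. i \<le> q})"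
  shows "(\<forall>j \<le> q - 2. \<forall>k1 \<in> T j. \<forall>k2 \<in> T j.
            cinner (M \<union> {0}) (Phi k1) (Phi k2) = (if k1 = k2 then 1 else 0))
       \<and> (\<forall>j1 j2 k1 k2. j1 \<le> q - 2 \<and> j2 \<le> q - 2 \<and> j1 \<noteq> j2 \<and> k1 \<in> T j1 \<and> k2 \<in> T j2 \<longrightarrow>
            (sqrt q - 1) / (q + 1) \<le> cmod (cinner (M \<union> {0}) (Phi k1) (Phi k2))
            \<and> cmod (cinner (M \<union> {0}) (Phi k1) (Phi k2)) \<le> (sqrt q + 1) / (q + 1))"
proof -
  have "K \<noteq> UNIV"
  proof
    assume "K = UNIV"
    then have "q * q = q * 1" using assms(2,4) by (simp add: power2_eq_square)
    with two_le_card_subfield[OF assms(3)] assms(4) show False by simp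
  qed
  with notin_subfield_if_adjoin_eq_UNIV[OF assms(3,5)] have "\<alpha> \<notin> K" .
  then interpret quadratic_extension_primitive_root K \<alpha> g
    by unfold_locales (use assms(2-4,6) in simp_all)
  have gram: "cinner (M \<union> {0}) (Phi k1) (Phi k2) = frame_gram k1 k2" for k1 k2
    unfolding frame_gram_def M_def Phi_def N_def assms(4) by (rule refl)
  have "q - 2 < q - 1" using two_le_card_subfield[OF subfield] assms(4) by simp
  show ?thesis
  proof (rule conjI; intro allI impI ballI)
    fix j k1 k2 assume "k1 \<in> T j" "k2 \<in> T j"
    then obtain d where "int k1 - int k2 = d * int (card K - 1)" "\<bar>d\<bar> \<le> int (card K)"
      unfolding T_def assms(4) by (rule int_diff_of_same_class)
    then show "cinner (M \<union> {0}) (Phi k1) (Phi k2) = (if k1 = k2 then 1 else 0)"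
      unfolding gram by (rule frame_gram_same_class)
  next
    fix j1 j2 k1 k2 assume "j1 \<le> q - 2 \<and> j2 \<le> q - 2 \<and> j1 \<noteq> j2 \<and> k1 \<in> T j1 \<and> k2 \<in> T j2"
    with \<open>q - 2 < q - 1\<close> have "\<not> int (card K - 1) dvd int k1 - int k2"
      unfolding assms(4) T_def
      by (intro not_dvd_int_diff_of_distinct_classes[of k1 j1 "q - 1" q k2 j2]) auto
    from norm_frame_gram_bounds[OF this]
    show "(sqrt q - 1) / (q + 1) \<le> cmod (cinner (M \<union> {0}) (Phi k1) (Phi k2))
        \<and> cmod (cinner (M \<union> {0}) (Phi k1) (Phi k2)) \<le> (sqrt q + 1) / (q + 1)"
      unfolding gram assms(4) by simp
  qed
qed

end
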